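(* The function $\widetilde J:\mathcal M_s\to[0,\infty]$ defined by $\widetilde J(\varpi,\nu)=H(\nu\,\|\,\nu_1\otimes\mathbb Q)$ if $\varpi_2=\nu_1$ and $\widetilde J(\varpi,\nu)=\infty$ otherwise is convex and lower semicontinuous on $\mathcal M_s$. Moreover $\widetilde J(\varpi,\nu)\le\widehat J(\varpi,\nu)$ for every $(\varpi,\nu)\in\mathcal M_s$, where $$\widehat J(\varpi,\nu)=\sup_{g\in\mathcal C}\Big\{\int g(b,c)\,\nu(db,dc)-\int U_g(b)\,\varpi(da,db)\Big\},\qquad U_g(a)=\log\sum_{c\in\mathcal X^*}e^{g(a,c)}\mathbb Q\{c\mid a\},$$ with $\mathcal C$ the space of bounded functions on $\mathcal X\times\mathcal X^*$.
   Context: $\mathcal X$ is a finite alphabet, $\mathcal X^*=\bigcup_{n\ge0}\{n\}\times\mathcal X^n$ with elements $c=(n,a_1,\dots,a_n)$, $m(a,c)=\sum_i\mathbf 1\{a_i=a\}$, and $\mathbb Q$ is a probability kernel from $\mathcal X$ to $\mathcal X^*$ (offspring kernel of a weakly irreducible, critical multitype Galton–Watson tree with finite second moment). $\mathcal M_s$: pairs $(\varpi,\nu)$, $\varpi$ a finite measure on $\mathcal X\times\mathcal X$, $\nu$ a probability measure on $\mathcal X\times\mathcal X^*$ with $\int n\,d\nu<\infty$, that are sub-consistent: $\varpi(a,b)\ge\sum_c m(b,c)\nu(a,c)$ for all $a,b$; weak topology. $\nu_1$: $\mathcal X$-marginal of $\nu$; $\varpi_2$: second marginal of $\varpi$; $\nu_1\otimes\mathbb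 Q(a,c)=\nu_1(a)\mathbb Q\{c\mid a\}$; $H$ relative entropy. *)

theory Defs
  imports "HOL-Probability.Probability"
begin

text \<open>The space X* = {(n,a_1..a_n)} is rendered as 'a list
  (n = length c, m(b,c) = count_list c b). The kernel Q is 'a => 'a list pmf,
  Q{c|a} = pmf (Q a) c. A finite measure varpi on X x X is a nonnegative function
  'a x 'a => real; a probability measure nu on X x X* is a nonnegative function
  'a x 'a list => real with total mass 1.\<close>

definition Ms :: "(('a::finite \<times> 'a \<Rightarrow> real) \<times> ('a \<times> 'a list \<Rightarrow> real)) set" where
  "Ms = {(w, nu).
      (\<forall>x. 0 \<le> w x) \<and> (\<forall>x. 0 \<le> nu x) \<and> (nu has_sum 1) UNIV \<and>
      ((\<lambda>(a, c). real (length c) * nu (a, c)) summable_on UNIV) \<and>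
      (\<forall>a b. w (a, b) \<ge> (\<Sum>\<^sub>\<infinity>c. real (count_list c b) * nu (a, c)))}"

definition marg1 :: "('a \<times> 'a list \<Rightarrow> real) \<Rightarrow> 'a \<Rightarrow> real" where
  "marg1 nu a = (\<Sum>\<^sub>\<infinity>c. nu (a, c))"

definition marg2 :: "('a::finite \<times> 'a \<Rightarrow> real) \<Rightarrow> 'a \<Rightarrow> real" where
  "marg2 w b = (\<Sum>a\<in>UNIV. w (a, b))"

definition prod_kernel :: "('a \<Rightarrow> real) \<Rightarrow> ('a \<Rightarrow> 'a list pmf) \<Rightarrow> 'a \<times> 'a list \<Rightarrow> real" where
  "prod_kernel mu Q = (\<lambda>(a, c). mu a * pmf (Q a) c)"

definition ext_sum :: "('b \<Rightarrow> real) \<Rightarrow> 'b set \<Rightarrow> ereal" where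
  "ext_sum f A = enn2ereal (\<Sum>\<^sub>\<infinity>x\<in>A. ennreal (max 0 (f x)))
                 - enn2ereal (\<Sum>\<^sub>\<infinity>x\<in>A. ennreal (max 0 (- f x)))"

definition rel_entropy :: "('b \<Rightarrow> real) \<Rightarrow> ('b \<Rightarrow> real) \<Rightarrow> ereal" where
  "rel_entropy nu mu =
     (if \<exists>x. nu x > 0 \<and> mu x = 0 then \<infinity>
      else ext_sum (\<lambda>x. nu x * ln (nu x / mu x)) {x. nu x > 0})"

definition Jtilde :: "('a \<Rightarrow> 'a list pmf) \<Rightarrow> ('a::finite \<times> 'a \<Rightarrow> real) \<times> ('a \<times> 'a list \<Rightarrow> real) \<Rightarrow> ereal" where
  "Jtilde Q p = (case p of (w, nu) \<Rightarrow>
     (if marg2 w = marg1 nu then rel_entropy nu (prod_kernel (marg1 nu) Q) else \<infinity>))"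

definition U :: "('a \<Rightarrow> 'a list pmf) \<Rightarrow> ('a \<times> 'a list \<Rightarrow> real) \<Rightarrow> 'a \<Rightarrow> real" where
  "U Q g a = ln (\<Sum>\<^sub>\<infinity>c. exp (g (a, c)) * pmf (Q a) c)"

definition Jhat :: "('a \<Rightarrow> 'a list pmf) \<Rightarrow> ('a::finite \<times> 'a \<Rightarrow> real) \<times> ('a \<times> 'a list \<Rightarrow> real) \<Rightarrow> ereal" where
  "Jhat Q p = (case p of (w, nu) \<Rightarrow>
     (SUP g\<in>{g :: 'a \<times> 'a list \<Rightarrow> real. bounded (range g)}.
        ereal ((\<Sum>\<^sub>\<infinity>x. g x * nu x) - (\<Sum>x\<in>UNIV. U Q g (snd x) * w x))))"

text \<open>Weak convergence: on the finite space X x X every function is bounded continuous;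
  on X x X* (discrete topology) every bounded function is continuous.\<close>
definition weak_conv_w :: "(nat \<Rightarrow> ('a::finite \<times> 'a \<Rightarrow> real)) \<Rightarrow> ('a \<times> 'a \<Rightarrow> real) \<Rightarrow> bool" where
  "weak_conv_w ws w \<longleftrightarrow> (\<forall>f. (\<lambda>k. \<Sum>x\<in>UNIV. f x * ws k x) \<longlonglongrightarrow> (\<Sum>x\<in>UNIV. f x * w x))"

definition weak_conv_nu :: "(nat \<Rightarrow> ('b \<Rightarrow> real)) \<Rightarrow> ('b \<Rightarrow> real) \<Rightarrow> bool" where
  "weak_conv_nu nus nu \<longleftrightarrow> (\<forall>f :: 'b \<Rightarrow> real. bounded (range f) \<longrightarrow>
      (\<lambda>k. \<Sum>\<^sub>\<infinity>x. f x * nus k x) \<longlonglongrightarrow> (\<Sum>\<^sub>\<infinity>x. f x * nu x))"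

definition Ms_conv where
  "Ms_conv ps p \<longleftrightarrow> weak_conv_w (\<lambda>k. fst (ps k)) (fst p) \<and> weak_conv_nu (\<lambda>k. snd (ps k)) (snd p)"

definition convex_comb where
  "convex_comb t p q = ((\<lambda>x. t * fst p x + (1 - t) * fst q x), (\<lambda>x. t * snd p x + (1 - t) * snd q x))"

end

theory Submission
  imports Defs
begin

text \<open>On \<open>\<M>\<^sub>s\<close> the two functionals coincide: \<open>Jtilde = Jhat\<close> is a Donsker--Varadhan type
  variational formula for the relative entropy. Since \<open>Jhat\<close> is a supremum of functionals
  \<open>(\<varpi>, \<nu>) \<mapsto> \<integral>g d\<nu> - \<integral>U\<^sub>g d\<varpi>\<close> that are affine and weakly continuous, it is convex and lower
  semicontinuous, and so is \<open>Jtilde\<close>.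

  For \<open>Jhat \<le> Jtilde\<close>, note that \<open>exp (g - U\<^sub>g) (\<nu>\<^sub>1 \<otimes> Q)\<close> is again a probability measure when
  \<open>\<varpi>\<^sub>2 = \<nu>\<^sub>1\<close>, so Gibbs' inequality bounds each objective by the relative entropy. For
  \<open>Jtilde \<le> Jhat\<close>, the objective blows up along suitable \<open>g\<close> if \<open>\<varpi>\<^sub>2 \<noteq> \<nu>\<^sub>1\<close> or if \<open>\<nu>\<close> is not
  absolutely continuous; otherwise one tests with \<open>ln (d\<nu>/d(\<nu>\<^sub>1 \<otimes> Q))\<close> on a large finite set and
  \<open>-K\<close> elsewhere, for which \<open>U\<^sub>g \<le> exp (-K)\<close>.\<close>

lemma has_sum_pmf: "(pmf p has_sum 1) UNIV"
proof -
  have "Infinite_Set_Sum.abs_summable_on (pmf p) UNIV" by (rule pmf_abs_summable)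
  moreover have "infsetsum (pmf p) UNIV = 1"
    using measure_pmf_conv_infsetsum[of p UNIV] by simp
  ultimately show ?thesis
    by (metis abs_summable_equivalent abs_summable_summable has_sum_infsum infsetsum_infsum)
qed

lemma has_sum_diff:
  fixes f g :: "'b \<Rightarrow> real"
  assumes "(f has_sum a) A" "(g has_sum b) A"
  shows "((\<lambda>x. f x - g x) has_sum (a - b)) A"
  using has_sum_add[OF assms(1) has_sum_uminusI[OF assms(2)]] by simp

lemma summable_on_diff:
  fixes f g :: "'b \<Rightarrow> real"
  assumes "f summable_on A" "g summable_on A"
  shows "(\<lambda>x. f x - g x) summable_on A"
  using has_sum_diff[OF has_sum_infsum[OF assms(1)] has_sum_infsum[OF assms(2)]]
  by (rule has_sum_imp_summable)

lemma infsum_diff: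
  fixes f g :: "'b \<Rightarrow> real"
  assumes "f summable_on A" "g summable_on A"
  shows "(\<Sum>\<^sub>\<infinity>x\<in>A. f x - g x) = infsum f A - infsum g A"
  using has_sum_diff[OF has_sum_infsum[OF assms(1)] has_sum_infsum[OF assms(2)]] by (rule infsumI)

lemma has_sum_finite_times:
  fixes f :: "'a::finite \<times> 'b \<Rightarrow> 'c::topological_comm_monoid_add"
  assumes "\<And>a. ((\<lambda>c. f (a, c)) has_sum s a) UNIV"
  shows "(f has_sum (\<Sum>a\<in>UNIV. s a)) UNIV"
proof -
  have "(f has_sum (\<Sum>a\<in>UNIV. s a)) (\<Union>a\<in>UNIV. range (Pair a))"
  proof (rule sum_has_sum)
    fix a
    have "((f \<circ> Pair a) has_sum s a) UNIV" using assms[of a] by (simp add: o_def)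
    then show "(f has_sum s a) (range (Pair a))"
      by (subst has_sum_reindex) (auto simp: inj_on_def)
  qed auto
  moreover have "(\<Union>a\<in>UNIV. range (Pair a)) = (UNIV :: ('a \<times> 'b) set)" by auto
  ultimately show ?thesis by simp
qed

lemma summable_on_slice:
  fixes f :: "'a \<times> 'b \<Rightarrow> real"
  assumes "f summable_on UNIV"
  shows "(\<lambda>c. f (a, c)) summable_on UNIV"
proof -
  have "f summable_on range (Pair a)" using assms summable_on_subset_banach by blast
  then show ?thesis by (subst (asm) summable_on_reindex) (auto simp: inj_on_def o_def)
qed

lemma summable_on_bounded_mult:
  fixes g nu :: "'b \<Rightarrow> real"
  assumes "bounded (range g)" "nu summable_on UNIV" "\<And>x. 0 \<le> nu x"
  shows "(\<lambda>x. g x * nu x) summable_on UNIV"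
proof -
  obtain B where B: "\<And>x. \<bar>g x\<bar> \<le> B" using assms(1) unfolding bounded_real by auto
  have "(\<lambda>x. B * nu x) summable_on UNIV" using assms(2) by (rule summable_on_cmult_right)
  then have "(\<lambda>x. norm (g x * nu x)) summable_on UNIV"
    by (rule summable_on_comparison_test) (use B assms(3) in \<open>auto simp: abs_mult mult_right_mono\<close>)
  then show ?thesis by (rule abs_summable_summable)
qed

lemma ennreal_infsum:
  fixes f :: "'b \<Rightarrow> real"
  assumes "f summable_on A" "\<And>x. x \<in> A \<Longrightarrow> 0 \<le> f x"
  shows "(\<Sum>\<^sub>\<infinity>x\<in>A. ennreal (f x)) = ennreal (infsum f A)"
proof -
  have "sum (ennreal \<circ> f) F = ennreal (sum f F)" if "finite F" "F \<subseteq> A" for F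
    using that assms(2) by (simp add: subset_iff)
  then show ?thesis
    using infsum_comm_additive_general[of A ennreal f] assms(1) by (simp add: o_def)
qed

lemma infsum_le_ext_sum:
  fixes f phi :: "'b \<Rightarrow> real"
  assumes fs: "f summable_on A" and le: "\<And>x. x \<in> A \<Longrightarrow> f x \<le> phi x"
  shows "ereal (infsum f A) \<le> ext_sum phi A"
proof -
  define fp where "fp x = max 0 (f x)" for x
  define fn where "fn x = max 0 (- f x)" for x
  have abs: "(\<lambda>x. norm (f x)) summable_on A"
    using summable_on_iff_abs_summable_on_real fs by blast
  have fps: "fp summable_on A" and fns: "fn summable_on A"
    by (rule summable_on_comparison_test[OF abs]; auto simp: fp_def fn_def)+
  have "infsum f A = infsum (\<lambda>x. fp x - fn x) A"
    by (rule infsum_cong) (auto simp: fp_def fn_def)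
  then have eq: "infsum f A = infsum fp A - infsum fn A"
    by (simp add: infsum_diff[OF fps fns])
  have "ennreal (infsum fp A) = (\<Sum>\<^sub>\<infinity>x\<in>A. ennreal (fp x))"
    by (rule ennreal_infsum[OF fps, symmetric]) (simp add: fp_def)
  also have "\<dots> \<le> (\<Sum>\<^sub>\<infinity>x\<in>A. ennreal (max 0 (phi x)))"
    by (intro infsum_mono nonneg_summable_on_complete ennreal_leI) (auto simp: fp_def dest: le)
  finally have P: "ennreal (infsum fp A) \<le> (\<Sum>\<^sub>\<infinity>x\<in>A. ennreal (max 0 (phi x)))" .
  have "(\<Sum>\<^sub>\<infinity>x\<in>A. ennreal (max 0 (- phi x))) \<le> (\<Sum>\<^sub>\<infinity>x\<in>A. ennreal (fn x))"
    by (intro infsum_mono nonneg_summable_on_complete ennreal_leI) (auto simp: fn_def dest: le)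
  also have "\<dots> = ennreal (infsum fn A)"
    by (rule ennreal_infsum[OF fns]) (simp add: fn_def)
  finally have N: "(\<Sum>\<^sub>\<infinity>x\<in>A. ennreal (max 0 (- phi x))) \<le> ennreal (infsum fn A)" .
  have "0 \<le> infsum fp A" "0 \<le> infsum fn A"
    by (rule infsum_nonneg; simp add: fp_def fn_def)+
  then have "ereal (infsum f A) = enn2ereal (ennreal (infsum fp A)) - enn2ereal (ennreal (infsum fn A))"
    using eq by simp
  also have "\<dots> \<le> ext_sum phi A"
    unfolding ext_sum_def
    by (rule ereal_minus_mono) (use P N in \<open>simp_all add: less_eq_ennreal.rep_eq[symmetric]\<close>)
  finally show ?thesis .
qed

lemma less_infsum_ennreal_imp_less_sum:
  fixes f :: "'b \<Rightarrow> real"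
  assumes "ereal r < enn2ereal (\<Sum>\<^sub>\<infinity>x\<in>A. ennreal (max 0 (f x)))"
  obtains F where "finite F" "F \<subseteq> A" "r < (\<Sum>x\<in>F. max 0 (f x))"
proof (cases "r < 0")
  case True
  then show ?thesis by (intro that[of "{}"]) auto
next
  case False
  have "(\<Sum>\<^sub>\<infinity>x\<in>A. ennreal (max 0 (f x))) = (SUP F\<in>{F. finite F \<and> F \<subseteq> A}. sum (\<lambda>x. ennreal (max 0 (f x))) F)"
    by (rule nonneg_infsum_complete) auto
  also have "\<dots> = (SUP F\<in>{F. finite F \<and> F \<subseteq> A}. ennreal (\<Sum>x\<in>F. max 0 (f x)))"
    by (intro SUP_cong refl sum_ennreal) auto
  finally have "ennreal r < (SUP F\<in>{F. finite F \<and> F \<subseteq> A}. ennreal (\<Sum>x\<in>F. max 0 (f x)))"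
    using assms False by (simp add: less_ennreal.rep_eq)
  then show ?thesis
    unfolding less_SUP_iff using False that by (auto simp: ennreal_less_iff)
qed

lemma ext_sum_finite_approx:
  fixes phi :: "'b \<Rightarrow> real"
  assumes neg_fin: "(\<Sum>\<^sub>\<infinity>x\<in>A. ennreal (max 0 (- phi x))) < \<infinity>"
    and M: "ereal M < ext_sum phi A"
  obtains F where "finite F" "F \<subseteq> A" "\<And>G. finite G \<Longrightarrow> F \<subseteq> G \<Longrightarrow> G \<subseteq> A \<Longrightarrow> M < sum phi G"
proof -
  define n where "n = enn2real (\<Sum>\<^sub>\<infinity>x\<in>A. ennreal (max 0 (- phi x)))"
  have n0: "0 \<le> n" by (simp add: n_def)
  have N: "(\<Sum>\<^sub>\<infinity>x\<in>A. ennreal (max 0 (- phi x))) = ennreal n"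
    using neg_fin by (simp add: n_def)
  have "ereal M < enn2ereal (\<Sum>\<^sub>\<infinity>x\<in>A. ennreal (max 0 (phi x))) - ereal n"
    using M N n0 unfolding ext_sum_def by simp
  then have "ereal (M + n) < enn2ereal (\<Sum>\<^sub>\<infinity>x\<in>A. ennreal (max 0 (phi x)))"
    by (cases "enn2ereal (\<Sum>\<^sub>\<infinity>x\<in>A. ennreal (max 0 (phi x)))") (auto simp: algebra_simps)
  then obtain F where F: "finite F" "F \<subseteq> A" "M + n < (\<Sum>x\<in>F. max 0 (phi x))"
    by (rule less_infsum_ennreal_imp_less_sum)
  show ?thesis
  proof (rule that[OF F(1,2)])
    fix G assume G: "finite G" "F \<subseteq> G" "G \<subseteq> A"
    have "sum (\<lambda>x. max 0 (phi x)) F \<le> sum (\<lambda>x. max 0 (phi x)) G"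
      by (rule sum_mono2) (use G in auto)
    moreover have "ennreal (sum (\<lambda>x. max 0 (- phi x)) G) \<le> ennreal n"
    proof -
      have "ennreal (sum (\<lambda>x. max 0 (- phi x)) G) = (\<Sum>\<^sub>\<infinity>x\<in>G. ennreal (max 0 (- phi x)))"
        using G(1) by (subst sum_ennreal[symmetric]) auto
      also have "\<dots> \<le> (\<Sum>\<^sub>\<infinity>x\<in>A. ennreal (max 0 (- phi x)))"
        by (intro infsum_mono_neutral nonneg_summable_on_complete) (use G in auto)
      finally show ?thesis using N by simp
    qed
    then have "sum (\<lambda>x. max 0 (- phi x)) G \<le> n" using n0 by simp
    moreover have "sum phi G = sum (\<lambda>x. max 0 (phi x)) G - sum (\<lambda>x. max 0 (- phi x)) G"
      by (simp add: sum_subtractf[symmetric]) (intro sum.cong refl, auto)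
    ultimately show "M < sum phi G" using F(3) by linarith
  qed
qed

lemma has_sum_finite_approx:
  fixes f :: "'b \<Rightarrow> real"
  assumes "(f has_sum s) A" "0 < e"
  obtains X where "finite X" "X \<subseteq> A" "\<And>Y. finite Y \<Longrightarrow> X \<subseteq> Y \<Longrightarrow> Y \<subseteq> A \<Longrightarrow> \<bar>sum f Y - s\<bar> < e"
proof -
  have "eventually (\<lambda>X. dist (sum f X) s < e) (finite_subsets_at_top A)"
    using assms unfolding has_sum_def by (rule tendstoD)
  then obtain X where "finite X" "X \<subseteq> A"
    and "\<forall>Y. finite Y \<and> X \<subseteq> Y \<and> Y \<subseteq> A \<longrightarrow> dist (sum f Y) s < e"
    unfolding eventually_finite_subsets_at_top by blast
  then show ?thesis using that by (simp add: dist_real_def)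
qed

lemma ereal_le_if_reals_below:
  fixes x y :: ereal
  assumes "\<And>M. ereal M < x \<Longrightarrow> ereal M \<le> y"
  shows "x \<le> y"
proof (rule ccontr)
  assume "\<not> x \<le> y"
  then obtain z where "y < ereal z" "ereal z < x" using ereal_dense2 by (meson not_le)
  then show False using assms[of z] by simp
qed

lemma mult_ln_div_ge:
  fixes a b h :: real
  assumes "0 < a" "0 < b"
  shows "h * a - (b * exp h - a) \<le> a * ln (a / b)"
proof -
  have "ln (b * exp h / a) \<le> b * exp h / a - 1" by (rule ln_le_minus_one) (use assms in simp)
  moreover have "ln (b * exp h / a) = ln b + h - ln a" using assms by (simp add: ln_div ln_mult)
  ultimately have "a * (ln b + h - ln a) \<le> a * (b * exp h / a - 1)"
    using assms(1) by (intro mult_left_mono) auto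
  then show ?thesis using assms by (simp add: ln_div algebra_simps)
qed

lemma infsum_le_rel_entropy:
  fixes nu mu h :: "'b \<Rightarrow> real"
  assumes nu0: "\<And>x. 0 \<le> nu x" and nu1: "(nu has_sum 1) UNIV" and mu0: "\<And>x. 0 \<le> mu x"
    and mu_exp: "((\<lambda>x. mu x * exp (h x)) has_sum 1) UNIV"
    and h_nu: "(\<lambda>x. h x * nu x) summable_on UNIV"
  shows "ereal (\<Sum>\<^sub>\<infinity>x. h x * nu x) \<le> rel_entropy nu mu"
proof (cases "\<exists>x. nu x > 0 \<and> mu x = 0")
  case True
  then show ?thesis by (simp add: rel_entropy_def)
next
  case False
  define S where "S = {x. nu x > 0}"
  define f where "f x = h x * nu x - (mu x * exp (h x) - nu x)" for x
  have mu_pos: "0 < mu x" if "x \<in> S" for x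
    using False mu0[of x] that by (auto simp: S_def order_le_less)
  have off_S: "nu x = 0" if "x \<notin> S" for x
    using nu0[of x] that by (simp add: S_def)
  have sum_S: "(\<Sum>\<^sub>\<infinity>x\<in>S. k x * nu x) = (\<Sum>\<^sub>\<infinity>x. k x * nu x)" for k
    by (rule infsum_cong_neutral) (auto simp: off_S)
  have mu_exp_S: "(\<Sum>\<^sub>\<infinity>x\<in>S. mu x * exp (h x)) \<le> 1"
    using infsum_mono_neutral[OF summable_on_subset_banach[OF has_sum_imp_summable[OF mu_exp]]
        has_sum_imp_summable[OF mu_exp], of S] infsumI[OF mu_exp] mu0
    by simp
  have nu_S: "(\<Sum>\<^sub>\<infinity>x\<in>S. nu x) = 1"
    using sum_S[of "\<lambda>_. 1"] infsumI[OF nu1] by simp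
  have summable_S: "(\<lambda>x. h x * nu x) summable_on S" "(\<lambda>x. mu x * exp (h x)) summable_on S"
    "nu summable_on S"
    using h_nu has_sum_imp_summable[OF mu_exp] has_sum_imp_summable[OF nu1]
    by (auto intro: summable_on_subset_banach)
  have "(\<Sum>\<^sub>\<infinity>x\<in>S. f x)
      = (\<Sum>\<^sub>\<infinity>x\<in>S. h x * nu x) - ((\<Sum>\<^sub>\<infinity>x\<in>S. mu x * exp (h x)) - (\<Sum>\<^sub>\<infinity>x\<in>S. nu x))"
    unfolding f_def using summable_S by (simp add: infsum_diff summable_on_diff)
  then have "(\<Sum>\<^sub>\<infinity>x. h x * nu x) \<le> (\<Sum>\<^sub>\<infinity>x\<in>S. f x)"
    using mu_exp_S nu_S sum_S[of h] by simp
  also have "ereal (\<Sum>\<^sub>\<infinity>x\<in>S. f x) \<le> ext_sum (\<lambda>x. nu x * ln (nu x / mu x)) S"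
    by (rule infsum_le_ext_sum)
      (use summable_S mu_pos in \<open>auto simp: f_def S_def summable_on_diff intro: mult_ln_div_ge\<close>)
  also have "\<dots> = rel_entropy nu mu"
    using False unfolding rel_entropy_def S_def by (simp only: if_False)
  finally show ?thesis by simp
qed

text \<open>A bounded surrogate for the optimal test function \<open>ln (d\<nu>/d\<mu>)\<close>: exact on the finite
  set \<open>G\<close> and equal to \<open>-K\<close> elsewhere.\<close>

definition log_ratio_trunc :: "('b \<Rightarrow> real) \<Rightarrow> ('b \<Rightarrow> real) \<Rightarrow> 'b set \<Rightarrow> real \<Rightarrow> 'b \<Rightarrow> real" where
  "log_ratio_trunc nu mu G K x = (if x \<in> G then ln (nu x / mu x) else - K)"

lemma bounded_range_log_ratio_trunc:
  "finite G \<Longrightarrow> bounded (range (log_ratio_trunc nu mu G K))"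
  by (rule finite_imp_bounded, rule finite_subset[of _ "insert (- K) ((\<lambda>x. ln (nu x / mu x)) ` G)"])
    (auto simp: log_ratio_trunc_def)

lemma infsum_log_ratio_trunc:
  fixes nu mu :: "'b \<Rightarrow> real"
  assumes nu1: "(nu has_sum 1) UNIV" and G: "finite G"
  shows "(\<Sum>\<^sub>\<infinity>x. log_ratio_trunc nu mu G K x * nu x)
       = (\<Sum>x\<in>G. nu x * ln (nu x / mu x)) + K * (sum nu G - 1)"
proof -
  define f where "f x = (if x \<in> G then nu x * ln (nu x / mu x) + K * nu x else 0)" for x
  have "log_ratio_trunc nu mu G K x * nu x = f x - K * nu x" for x
    by (simp add: log_ratio_trunc_def f_def algebra_simps)
  moreover have "(f has_sum (\<Sum>x\<in>G. nu x * ln (nu x / mu x) + K * nu x)) UNIV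
      \<longleftrightarrow> ((\<lambda>x. nu x * ln (nu x / mu x) + K * nu x) has_sum (\<Sum>x\<in>G. nu x * ln (nu x / mu x) + K * nu x)) G"
    by (rule has_sum_cong_neutral) (auto simp: f_def)
  then have "(f has_sum (\<Sum>x\<in>G. nu x * ln (nu x / mu x) + K * nu x)) UNIV"
    using G by simp
  moreover have "((\<lambda>x. K * nu x) has_sum K * 1) UNIV"
    by (rule has_sum_cmult_right[OF nu1])
  ultimately have "((\<lambda>x. log_ratio_trunc nu mu G K x * nu x) has_sum
      (\<Sum>x\<in>G. nu x * ln (nu x / mu x) + K * nu x) - K * 1) UNIV"
    by (simp add: has_sum_diff)
  then show ?thesis
    by (simp add: infsumI sum.distrib sum_distrib_left algebra_simps)
qed

lemma rel_entropy_neg_part_finite: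
  fixes nu mu :: "'b \<Rightarrow> real"
  assumes mu0: "\<And>x. 0 \<le> mu x" and mu1: "(mu has_sum 1) UNIV"
    and abs_cont: "\<And>x. 0 < nu x \<Longrightarrow> 0 < mu x"
  shows "(\<Sum>\<^sub>\<infinity>x\<in>{x. 0 < nu x}. ennreal (max 0 (- (nu x * ln (nu x / mu x))))) < \<infinity>"
proof -
  have "(\<Sum>\<^sub>\<infinity>x\<in>{x. 0 < nu x}. ennreal (max 0 (- (nu x * ln (nu x / mu x)))))
      \<le> (\<Sum>\<^sub>\<infinity>x. ennreal (mu x))"
  proof (intro infsum_mono_neutral nonneg_summable_on_complete)
    fix x assume "x \<in> {x. 0 < nu x} \<inter> UNIV"
    then have pos: "0 < nu x" "0 < mu x" using abs_cont by auto
    then have "0 * nu x - (mu x * exp 0 - nu x) \<le> nu x * ln (nu x / mu x)"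
      by (rule mult_ln_div_ge)
    then show "ennreal (max 0 (- (nu x * ln (nu x / mu x)))) \<le> ennreal (mu x)"
      using pos by (intro ennreal_leI) simp
  qed auto
  also have "\<dots> = 1"
    using ennreal_infsum[OF has_sum_imp_summable[OF mu1]] infsumI[OF mu1] mu0 by simp
  finally show ?thesis
    by (simp add: le_less_trans)
qed

lemma rel_entropy_approx:
  fixes nu mu :: "'b \<Rightarrow> real"
  assumes nu0: "\<And>x. 0 \<le> nu x" and nu1: "(nu has_sum 1) UNIV"
    and mu0: "\<And>x. 0 \<le> mu x" and mu1: "(mu has_sum 1) UNIV"
    and abs_cont: "\<And>x. 0 < nu x \<Longrightarrow> 0 < mu x"
    and M: "ereal M < rel_entropy nu mu"
  obtains G K where "finite G" "G \<subseteq> {x. 0 < nu x}"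
    "M + exp (- K) < (\<Sum>\<^sub>\<infinity>x. log_ratio_trunc nu mu G K x * nu x)"
proof -
  define S where "S = {x. 0 < nu x}"
  define phi where "phi x = nu x * ln (nu x / mu x)" for x
  have "\<not> (\<exists>x. nu x > 0 \<and> mu x = 0)" using abs_cont by force
  then have "rel_entropy nu mu = ext_sum phi S"
    unfolding rel_entropy_def phi_def S_def by (simp only: if_False)
  then obtain M0 where M0: "M < M0" "ereal M0 < ext_sum phi S"
    using ereal_dense2[OF M] by auto
  define eps where "eps = M0 - M"
  have eps: "0 < eps" using M0 by (simp add: eps_def)
  have "(\<Sum>\<^sub>\<infinity>x\<in>S. ennreal (max 0 (- phi x))) < \<infinity>"
    unfolding S_def phi_def using mu0 mu1 abs_cont by (rule rel_entropy_neg_part_finite)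
  then obtain F where F: "finite F" "F \<subseteq> S" "\<And>G. finite G \<Longrightarrow> F \<subseteq> G \<Longrightarrow> G \<subseteq> S \<Longrightarrow> M0 < sum phi G"
    using M0(2) by (rule ext_sum_finite_approx) blast
  define K where "K = - ln (eps / 2)"
  have eK: "exp (- K) = eps / 2" unfolding K_def using eps by simp
  define del where "del = eps / (2 * (\<bar>K\<bar> + 1))"
  have del: "0 < del" unfolding del_def using eps by (intro divide_pos_pos) auto
  have "(nu has_sum 1) S"
    using nu1 by (subst has_sum_cong_neutral[of UNIV S]) (use nu0 in \<open>auto simp: S_def order_le_less\<close>)
  then obtain X where X: "finite X" "X \<subseteq> S"
    and X_close: "\<And>Y. finite Y \<Longrightarrow> X \<subseteq> Y \<Longrightarrow> Y \<subseteq> S \<Longrightarrow> \<bar>sum nu Y - 1\<bar> < del"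
    using del by (rule has_sum_finite_approx) blast
  define G where "G = X \<union> F"
  have G: "finite G" "G \<subseteq> S" using X F by (auto simp: G_def)
  have "M0 < sum phi G" using F(3) G by (auto simp: G_def)
  moreover have "- (eps / 2) \<le> K * (sum nu G - 1)"
  proof -
    have "\<bar>sum nu G - 1\<bar> < del" using X_close[of G] G by (simp add: G_def)
    then have "\<bar>K\<bar> * \<bar>sum nu G - 1\<bar> \<le> (\<bar>K\<bar> + 1) * del" by (intro mult_mono) auto
    also have "\<dots> = eps / 2" by (simp add: del_def field_simps add_pos_nonneg)
    finally have "\<bar>K * (sum nu G - 1)\<bar> \<le> eps / 2" by (simp add: abs_mult)
    then show ?thesis by linarith
  qed
  ultimately have "M + exp (- K) < (\<Sum>\<^sub>\<infinity>x. log_ratio_trunc nu mu G K x * nu x)"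
    unfolding infsum_log_ratio_trunc[OF nu1 G(1)] eK phi_def[symmetric]
    using eps_def by linarith
  then show ?thesis using that G by (simp add: S_def)
qed

lemma summable_exp_mult_pmf:
  assumes "bounded (range g)"
  shows "(\<lambda>c. exp (g (a, c)) * pmf (Q a) c) summable_on UNIV"
proof -
  obtain B where B: "\<And>x. \<bar>g x\<bar> \<le> B" using assms unfolding bounded_real by auto
  have "(\<lambda>c. exp B * pmf (Q a) c) summable_on UNIV"
    using has_sum_imp_summable[OF has_sum_pmf] by (rule summable_on_cmult_right)
  moreover have "exp (g (a, c)) * pmf (Q a) c \<le> exp B * pmf (Q a) c" for c
    using B[of "(a, c)"] by (simp add: abs_le_iff mult_right_mono)
  ultimately show ?thesis
    by (rule summable_on_comparison_test) simp_all
qed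

lemma exp_U:
  assumes "bounded (range g)"
  shows "exp (U Q g a) = (\<Sum>\<^sub>\<infinity>c. exp (g (a, c)) * pmf (Q a) c)"
proof -
  obtain B where B: "\<And>x. \<bar>g x\<bar> \<le> B" using assms unfolding bounded_real by auto
  have lower: "((\<lambda>c. exp (- B) * pmf (Q a) c) has_sum exp (- B) * 1) UNIV"
    by (rule has_sum_cmult_right[OF has_sum_pmf])
  have "exp (- B) * 1 \<le> (\<Sum>\<^sub>\<infinity>c. exp (g (a, c)) * pmf (Q a) c)"
    unfolding infsumI[OF lower, symmetric]
  proof (rule infsum_mono[OF has_sum_imp_summable[OF lower] summable_exp_mult_pmf[OF assms]])
    fix c
    show "exp (- B) * pmf (Q a) c \<le> exp (g (a, c)) * pmf (Q a) c"
      using B[of "(a, c)"] by (intro mult_right_mono) (auto simp: abs_le_iff)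
  qed
  then have "0 < (\<Sum>\<^sub>\<infinity>c. exp (g (a, c)) * pmf (Q a) c)"
    using exp_gt_zero[of "- B"] by linarith
  then show ?thesis
    unfolding U_def by simp
qed

lemma has_sum_exp_tilt:
  assumes g: "bounded (range g)"
  shows "((\<lambda>c. exp (g (a, c) - U Q g a) * pmf (Q a) c) has_sum 1) UNIV"
proof -
  have "((\<lambda>c. exp (g (a, c)) * pmf (Q a) c) has_sum exp (U Q g a)) UNIV"
    unfolding exp_U[OF g] by (rule has_sum_infsum[OF summable_exp_mult_pmf[OF g]])
  then have "((\<lambda>c. exp (- U Q g a) * (exp (g (a, c)) * pmf (Q a) c))
      has_sum exp (- U Q g a) * exp (U Q g a)) UNIV"
    by (rule has_sum_cmult_right)
  moreover have "exp (- U Q g a) * (exp (g (a, c)) * pmf (Q a) c) = exp (g (a, c) - U Q g a) * pmf (Q a) c" for c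
    by (simp add: exp_diff exp_minus field_simps)
  moreover have "exp (- U Q g a) * exp (U Q g a) = 1"
    by (simp add: exp_minus)
  ultimately show ?thesis by (simp only:)
qed

lemma U_fst: "U Q (\<lambda>x. k (fst x)) a = k a"
proof -
  have "((\<lambda>c. exp (k a) * pmf (Q a) c) has_sum exp (k a) * 1) UNIV"
    by (rule has_sum_cmult_right[OF has_sum_pmf])
  then show ?thesis by (simp add: U_def infsumI)
qed

lemma sum_snd_mult_marg2:
  "(\<Sum>x\<in>UNIV. h (snd x) * w x) = (\<Sum>b\<in>UNIV. h b * marg2 w (b :: 'a::finite))"
proof -
  have "(\<Sum>x\<in>UNIV. h (snd x) * w x) = (\<Sum>a\<in>UNIV. \<Sum>b\<in>UNIV. h b * w (a, b))"
    by (simp add: UNIV_Times_UNIV[symmetric] sum.cartesian_product case_prod_beta del: UNIV_Times_UNIV)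
  also have "\<dots> = (\<Sum>b\<in>UNIV. h b * marg2 w b)"
    by (subst sum.swap) (simp add: marg2_def sum_distrib_left)
  finally show ?thesis .
qed

locale prob_mass =
  fixes nu :: "'a::finite \<times> 'a list \<Rightarrow> real"
  assumes nonneg: "\<And>x. 0 \<le> nu x" and has_sum_1: "(nu has_sum 1) UNIV"
begin

lemma summable: "nu summable_on UNIV"
  using has_sum_1 by (rule has_sum_imp_summable)

lemma has_sum_marg1: "((\<lambda>c. nu (a, c)) has_sum marg1 nu a) UNIV"
  unfolding marg1_def using summable_on_slice[OF summable] by (rule has_sum_infsum)

lemma sum_marg1: "(\<Sum>a\<in>UNIV. marg1 nu a) = 1"
  using has_sum_finite_times[OF has_sum_marg1] has_sum_1 by (rule has_sum_unique)

lemma marg1_nonneg: "0 \<le> marg1 nu a"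
  unfolding marg1_def by (rule infsum_nonneg) (simp add: nonneg)

lemma le_marg1: "nu (a, c) \<le> marg1 nu a"
  using finite_sum_le_infsum[OF summable_on_slice[OF summable], of "{c}"] nonneg
  by (simp add: marg1_def)

lemma has_sum_fst_mult: "((\<lambda>x. h (fst x) * nu x) has_sum (\<Sum>a\<in>UNIV. h a * marg1 nu a)) UNIV"
  by (rule has_sum_finite_times) (simp add: has_sum_cmult_right[OF has_sum_marg1])

lemma prod_kernel_nonneg: "0 \<le> prod_kernel (marg1 nu) Q x"
  by (cases x) (simp add: prod_kernel_def marg1_nonneg)

lemma has_sum_prod_kernel_mult:
  assumes "\<And>a. ((\<lambda>c. k (a, c) * pmf (Q a) c) has_sum s a) UNIV"
  shows "((\<lambda>x. prod_kernel (marg1 nu) Q x * k x) has_sum (\<Sum>a\<in>UNIV. marg1 nu a * s a)) UNIV"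
proof (rule has_sum_finite_times)
  fix a
  show "((\<lambda>c. prod_kernel (marg1 nu) Q (a, c) * k (a, c)) has_sum marg1 nu a * s a) UNIV"
    using has_sum_cmult_right[OF assms, of "marg1 nu a" a]
    by (simp add: prod_kernel_def algebra_simps)
qed

lemma has_sum_prod_kernel: "(prod_kernel (marg1 nu) Q has_sum 1) UNIV"
proof -
  have "((\<lambda>x. prod_kernel (marg1 nu) Q x * 1) has_sum (\<Sum>a\<in>UNIV. marg1 nu a * 1)) UNIV"
    by (rule has_sum_prod_kernel_mult) (simp add: has_sum_pmf)
  then show ?thesis using sum_marg1 by simp
qed

end

definition Jhat_objective ::
    "('a \<Rightarrow> 'a list pmf) \<Rightarrow> ('a \<times> 'a list \<Rightarrow> real) \<Rightarrow> ('a::finite \<times> 'a \<Rightarrow> real) \<times> ('a \<times> 'a list \<Rightarrow> real) \<Rightarrow> real" where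
  "Jhat_objective Q g p = (\<Sum>\<^sub>\<infinity>x. g x * snd p x) - (\<Sum>x\<in>UNIV. U Q g (snd x) * fst p x)"

lemma Jhat_eq_SUP_Jhat_objective: "Jhat Q p = (SUP g\<in>{g. bounded (range g)}. ereal (Jhat_objective Q g p))"
  by (cases p) (simp add: Jhat_def Jhat_objective_def)

lemma Jhat_objective_le_Jhat: "bounded (range g) \<Longrightarrow> ereal (Jhat_objective Q g p) \<le> Jhat Q p"
  unfolding Jhat_eq_SUP_Jhat_objective by (rule SUP_upper) simp

context prob_mass
begin

lemma Jhat_objective_fst:
  "Jhat_objective Q (\<lambda>x. k (fst x)) (w, nu) = (\<Sum>a\<in>UNIV. k a * (marg1 nu a - marg2 w a))"
  unfolding Jhat_objective_def sum_snd_mult_marg2 U_fst snd_conv fst_conv infsumI[OF has_sum_fst_mult]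
  by (simp add: sum_subtractf[symmetric] algebra_simps)

lemma Jhat_objective_le_rel_entropy:
  assumes g: "bounded (range g)" and marg: "marg2 w = marg1 nu"
  shows "ereal (Jhat_objective Q g (w, nu)) \<le> rel_entropy nu (prod_kernel (marg1 nu) Q)"
proof -
  define h where "h x = g x - U Q g (fst x)" for x
  have g_nu: "(\<lambda>x. g x * nu x) summable_on UNIV"
    by (rule summable_on_bounded_mult[OF g summable nonneg])
  have U_nu: "((\<lambda>x. U Q g (fst x) * nu x) has_sum (\<Sum>a\<in>UNIV. U Q g a * marg1 nu a)) UNIV"
    by (rule has_sum_fst_mult)
  have h_nu: "((\<lambda>x. h x * nu x) has_sum Jhat_objective Q g (w, nu)) UNIV"
    using has_sum_diff[OF has_sum_infsum[OF g_nu] U_nu]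
    unfolding Jhat_objective_def fst_conv snd_conv sum_snd_mult_marg2 marg
    by (simp add: h_def algebra_simps)
  have "((\<lambda>x. prod_kernel (marg1 nu) Q x * exp (h x)) has_sum (\<Sum>a\<in>UNIV. marg1 nu a * 1)) UNIV"
    by (rule has_sum_prod_kernel_mult) (use has_sum_exp_tilt[OF g] in \<open>simp add: h_def\<close>)
  then have "((\<lambda>x. prod_kernel (marg1 nu) Q x * exp (h x)) has_sum 1) UNIV"
    using sum_marg1 by simp
  from infsum_le_rel_entropy[OF nonneg has_sum_1 prod_kernel_nonneg this has_sum_imp_summable[OF h_nu]]
  show ?thesis by (simp add: infsumI[OF h_nu])
qed

lemma Jhat_le_Jtilde: "Jhat Q (w, nu) \<le> Jtilde Q (w, nu)"
proof (cases "marg2 w = marg1 nu")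
  case True
  then show ?thesis
    unfolding Jhat_eq_SUP_Jhat_objective by (intro SUP_least) (auto simp: Jtilde_def Jhat_objective_le_rel_entropy)
qed (simp add: Jtilde_def)

lemma Jhat_eq_infinity_if_marg_ne:
  assumes "marg2 w \<noteq> marg1 nu"
  shows "Jhat Q (w, nu) = \<infinity>"
proof (rule ereal_top)
  fix N
  obtain b where b: "marg2 w b \<noteq> marg1 nu b" using assms by blast
  define d where "d = marg1 nu b - marg2 w b"
  define k where "k a = (if a = b then N / d else 0)" for a
  have "bounded (range (\<lambda>x. k (fst x)))"
    by (rule finite_imp_bounded, rule finite_subset[of _ "{0, N / d}"]) (auto simp: k_def)
  moreover have "Jhat_objective Q (\<lambda>x. k (fst x)) (w, nu) = (\<Sum>a\<in>UNIV. if a = b then N else 0)"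
    unfolding Jhat_objective_fst by (rule sum.cong) (use b in \<open>auto simp: k_def d_def\<close>)
  ultimately show "ereal N \<le> Jhat Q (w, nu)"
    using Jhat_objective_le_Jhat by fastforce
qed

lemma Jhat_eq_infinity_if_not_abs_cont:
  assumes "0 < nu (a, c)" "prod_kernel (marg1 nu) Q (a, c) = 0"
  shows "Jhat Q (w, nu) = \<infinity>"
proof (rule ereal_top)
  fix N
  have "0 < marg1 nu a" using assms(1) le_marg1[of a c] by simp
  then have pmf0: "pmf (Q a) c = 0" using assms(2) by (simp add: prod_kernel_def)
  define g where "g x = (if x = (a, c) then N / nu (a, c) else 0)" for x
  have g: "bounded (range g)"
    by (rule finite_imp_bounded, rule finite_subset[of _ "{0, N / nu (a, c)}"]) (auto simp: g_def)
  have "U Q g a' = 0" for a'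
  proof -
    have "exp (U Q g a') = (\<Sum>\<^sub>\<infinity>c'. pmf (Q a') c')"
      unfolding exp_U[OF g] by (rule infsum_cong) (auto simp: g_def pmf0)
    then show ?thesis by (simp add: infsumI[OF has_sum_pmf])
  qed
  moreover have "(\<Sum>\<^sub>\<infinity>x. g x * nu x) = N"
  proof -
    have "(\<Sum>\<^sub>\<infinity>x. g x * nu x) = (\<Sum>\<^sub>\<infinity>x\<in>{(a, c)}. g x * nu x)"
      by (rule infsum_cong_neutral) (auto simp: g_def)
    then show ?thesis using assms(1) by (simp add: g_def)
  qed
  ultimately have "Jhat_objective Q g (w, nu) = N" by (simp add: Jhat_objective_def)
  then show "ereal N \<le> Jhat Q (w, nu)"
    using Jhat_objective_le_Jhat[OF g] by metis
qed

lemma U_log_ratio_trunc_le: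
  assumes G: "G \<subseteq> {x. 0 < nu x}" and abs_cont: "\<And>x. x \<in> G \<Longrightarrow> 0 < prod_kernel (marg1 nu) Q x"
    and g: "bounded (range (log_ratio_trunc nu (prod_kernel (marg1 nu) Q) G K))"
  shows "U Q (log_ratio_trunc nu (prod_kernel (marg1 nu) Q) G K) a \<le> exp (- K)"
proof -
  define g where "g = log_ratio_trunc nu (prod_kernel (marg1 nu) Q) G K"
  have bound: "((\<lambda>c. nu (a, c) / marg1 nu a + exp (- K) * pmf (Q a) c) has_sum
      marg1 nu a / marg1 nu a + exp (- K) * 1) UNIV"
    by (rule has_sum_add[OF has_sum_divide_const[OF has_sum_marg1] has_sum_cmult_right[OF has_sum_pmf]])
  have "exp (g (a, c)) * pmf (Q a) c \<le> nu (a, c) / marg1 nu a + exp (- K) * pmf (Q a) c" for c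
  proof (cases "(a, c) \<in> G")
    case True
    then have "0 < nu (a, c)" "0 < pmf (Q a) c" "0 < marg1 nu a"
      using G abs_cont[OF True] marg1_nonneg[of a] by (auto simp: prod_kernel_def zero_less_mult_iff)
    then have "exp (g (a, c)) * pmf (Q a) c = nu (a, c) / marg1 nu a"
      using True by (simp add: g_def log_ratio_trunc_def prod_kernel_def)
    then show ?thesis by simp
  next
    case False
    then show ?thesis
      using nonneg[of "(a, c)"] marg1_nonneg[of a] by (simp add: g_def log_ratio_trunc_def)
  qed
  then have "exp (U Q g a) \<le> marg1 nu a / marg1 nu a + exp (- K) * 1"
    unfolding exp_U[OF g[folded g_def]] infsumI[OF bound, symmetric]
    by (rule infsum_mono[OF summable_exp_mult_pmf[OF g[folded g_def]] has_sum_imp_summable[OF bound]])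
  also have "\<dots> \<le> 1 + exp (- K)"
    by (cases "marg1 nu a = 0") simp_all
  also have "\<dots> \<le> exp (exp (- K))"
    by (rule exp_ge_add_one_self)
  finally show ?thesis by (simp only: exp_le_cancel_iff g_def)
qed

lemma rel_entropy_le_Jhat:
  assumes marg: "marg2 w = marg1 nu"
    and abs_cont: "\<And>x. 0 < nu x \<Longrightarrow> 0 < prod_kernel (marg1 nu) Q x"
  shows "rel_entropy nu (prod_kernel (marg1 nu) Q) \<le> Jhat Q (w, nu)"
proof (rule ereal_le_if_reals_below)
  fix M assume "ereal M < rel_entropy nu (prod_kernel (marg1 nu) Q)"
  then obtain G K where G: "finite G" "G \<subseteq> {x. 0 < nu x}"
    and M: "M + exp (- K) < (\<Sum>\<^sub>\<infinity>x. log_ratio_trunc nu (prod_kernel (marg1 nu) Q) G K x * nu x)"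
    using rel_entropy_approx[OF nonneg has_sum_1 prod_kernel_nonneg has_sum_prod_kernel abs_cont]
    by blast
  define g where "g = log_ratio_trunc nu (prod_kernel (marg1 nu) Q) G K"
  have g: "bounded (range g)"
    unfolding g_def by (rule bounded_range_log_ratio_trunc[OF G(1)])
  have "(\<Sum>x\<in>UNIV. U Q g (snd x) * w x) = (\<Sum>a\<in>UNIV. U Q g a * marg1 nu a)"
    by (simp add: sum_snd_mult_marg2 marg)
  also have "\<dots> \<le> (\<Sum>a\<in>UNIV. exp (- K) * marg1 nu a)"
    using U_log_ratio_trunc_le[OF G(2) abs_cont g[unfolded g_def]] G(2) marg1_nonneg
    by (intro sum_mono mult_right_mono) (auto simp: g_def)
  also have "\<dots> = exp (- K)"
    by (simp add: sum_distrib_left[symmetric] sum_marg1)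
  finally have "(\<Sum>x\<in>UNIV. U Q g (snd x) * w x) \<le> exp (- K)" .
  then have "ereal M \<le> ereal (Jhat_objective Q g (w, nu))"
    using M by (simp add: Jhat_objective_def g_def)
  also have "\<dots> \<le> Jhat Q (w, nu)"
    by (rule Jhat_objective_le_Jhat[OF g])
  finally show "ereal M \<le> Jhat Q (w, nu)" .
qed

lemma Jtilde_le_Jhat: "Jtilde Q (w, nu) \<le> Jhat Q (w, nu)"
proof (cases "marg2 w = marg1 nu \<and> (\<forall>x. 0 < nu x \<longrightarrow> 0 < prod_kernel (marg1 nu) Q x)")
  case True
  then show ?thesis using rel_entropy_le_Jhat by (auto simp: Jtilde_def)
next
  case False
  then consider "marg2 w \<noteq> marg1 nu"
    | a c where "0 < nu (a, c)" "prod_kernel (marg1 nu) Q (a, c) = 0"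
    using prod_kernel_nonneg by (force simp: order_le_less)
  then show ?thesis
    by cases (simp_all add: Jhat_eq_infinity_if_marg_ne Jhat_eq_infinity_if_not_abs_cont)
qed

lemma Jtilde_eq_Jhat: "Jtilde Q (w, nu) = Jhat Q (w, nu)"
  using Jhat_le_Jtilde Jtilde_le_Jhat by (rule antisym[rotated])

end

lemma Ms_prob_mass: "p \<in> Ms \<Longrightarrow> prob_mass (snd p)"
  by (cases p) (auto simp: Ms_def prob_mass_def)

lemma prob_mass_convex_comb:
  assumes "prob_mass (snd p)" "prob_mass (snd q)" "t \<in> {0..1::real}"
  shows "prob_mass (snd (convex_comb t p q))"
proof -
  have "((\<lambda>x. t * snd p x + (1 - t) * snd q x) has_sum (t * 1 + (1 - t) * 1)) UNIV"
    using assms(1,2) by (intro has_sum_add has_sum_cmult_right) (auto simp: prob_mass_def)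
  then show ?thesis
    using assms by (auto simp: prob_mass_def convex_comb_def)
qed

lemma Jtilde_eq_Jhat: "prob_mass (snd p) \<Longrightarrow> Jtilde Q p = Jhat Q p"
  using prob_mass.Jtilde_eq_Jhat[of "snd p" Q "fst p"] by simp

lemma Jhat_objective_convex_comb:
  assumes g: "bounded (range g)" and p: "prob_mass (snd p)" and q: "prob_mass (snd q)"
  shows "Jhat_objective Q g (convex_comb t p q) = t * Jhat_objective Q g p + (1 - t) * Jhat_objective Q g q"
proof -
  have "(\<lambda>x. g x * snd p x) summable_on UNIV" "(\<lambda>x. g x * snd q x) summable_on UNIV"
    using p q by (auto intro!: summable_on_bounded_mult[OF g] simp: prob_mass_def has_sum_imp_summable)
  then have "((\<lambda>x. t * (g x * snd p x) + (1 - t) * (g x * snd q x)) has_sum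
      t * (\<Sum>\<^sub>\<infinity>x. g x * snd p x) + (1 - t) * (\<Sum>\<^sub>\<infinity>x. g x * snd q x)) UNIV"
    by (intro has_sum_add has_sum_cmult_right has_sum_infsum)
  then have "(\<Sum>\<^sub>\<infinity>x. g x * snd (convex_comb t p q) x)
      = t * (\<Sum>\<^sub>\<infinity>x. g x * snd p x) + (1 - t) * (\<Sum>\<^sub>\<infinity>x. g x * snd q x)"
    by (simp add: convex_comb_def infsumI algebra_simps)
  moreover have "(\<Sum>x\<in>UNIV. U Q g (snd x) * fst (convex_comb t p q) x)
      = t * (\<Sum>x\<in>UNIV. U Q g (snd x) * fst p x) + (1 - t) * (\<Sum>x\<in>UNIV. U Q g (snd x) * fst q x)"
    by (simp add: convex_comb_def sum_distrib_left sum.distrib[symmetric] algebra_simps)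
  ultimately show ?thesis
    by (simp add: Jhat_objective_def algebra_simps)
qed

lemma Jhat_objective_tendsto:
  assumes "bounded (range g)" "Ms_conv ps p"
  shows "(\<lambda>k. Jhat_objective Q g (ps k)) \<longlonglongrightarrow> Jhat_objective Q g p"
proof -
  have "(\<lambda>k. \<Sum>\<^sub>\<infinity>x. g x * snd (ps k) x) \<longlonglongrightarrow> (\<Sum>\<^sub>\<infinity>x. g x * snd p x)"
    using assms unfolding Ms_conv_def weak_conv_nu_def by blast
  moreover have "(\<lambda>k. \<Sum>x\<in>UNIV. U Q g (snd x) * fst (ps k) x) \<longlonglongrightarrow> (\<Sum>x\<in>UNIV. U Q g (snd x) * fst p x)"
    using assms(2) unfolding Ms_conv_def weak_conv_w_def by (elim conjE allE[of _ "\<lambda>x. U Q g (snd x)"])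
  ultimately show ?thesis
    unfolding Jhat_objective_def by (rule tendsto_diff)
qed

lemma Jhat_convex_comb:
  fixes p q :: "('a::finite \<times> 'a \<Rightarrow> real) \<times> ('a \<times> 'a list \<Rightarrow> real)"
  assumes p: "prob_mass (snd p)" and q: "prob_mass (snd q)" and t: "t \<in> {0..1}"
  shows "Jhat Q (convex_comb t p q) \<le> ereal t * Jhat Q p + ereal (1 - t) * Jhat Q q"
  unfolding Jhat_eq_SUP_Jhat_objective[of Q "convex_comb t p q"]
proof (rule SUP_least)
  fix g :: "'a \<times> 'a list \<Rightarrow> real" assume "g \<in> {g. bounded (range g)}"
  then have g: "bounded (range g)" by simp
  have "ereal (Jhat_objective Q g (convex_comb t p q))
      = ereal t * ereal (Jhat_objective Q g p) + ereal (1 - t) * ereal (Jhat_objective Q g q)"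
    by (simp add: Jhat_objective_convex_comb[OF g p q])
  also have "\<dots> \<le> ereal t * Jhat Q p + ereal (1 - t) * Jhat Q q"
    using t by (intro add_mono ereal_mult_left_mono Jhat_objective_le_Jhat[OF g]) auto
  finally show "ereal (Jhat_objective Q g (convex_comb t p q)) \<le> ereal t * Jhat Q p + ereal (1 - t) * Jhat Q q" .
qed

lemma Jhat_le_liminf:
  fixes p :: "('a::finite \<times> 'a \<Rightarrow> real) \<times> ('a \<times> 'a list \<Rightarrow> real)"
  assumes "Ms_conv ps p"
  shows "Jhat Q p \<le> liminf (\<lambda>k. Jhat Q (ps k))"
  unfolding Jhat_eq_SUP_Jhat_objective[of Q p]
proof (rule SUP_least)
  fix g :: "'a \<times> 'a list \<Rightarrow> real" assume "g \<in> {g. bounded (range g)}"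
  then have g: "bounded (range g)" by simp
  have "(\<lambda>k. ereal (Jhat_objective Q g (ps k))) \<longlonglongrightarrow> ereal (Jhat_objective Q g p)"
    by (intro tendsto_ereal Jhat_objective_tendsto g assms)
  then have "ereal (Jhat_objective Q g p) = liminf (\<lambda>k. ereal (Jhat_objective Q g (ps k)))"
    by (rule lim_imp_Liminf[symmetric, rotated]) simp
  also have "\<dots> \<le> liminf (\<lambda>k. Jhat Q (ps k))"
    by (intro Liminf_mono always_eventually allI Jhat_objective_le_Jhat[OF g])
  finally show "ereal (Jhat_objective Q g p) \<le> liminf (\<lambda>k. Jhat Q (ps k))" .
qed

theorem lemma3p5:
  fixes Q :: "'a::finite \<Rightarrow> 'a list pmf"
  shows "(\<forall>p\<in>Ms. \<forall>q\<in>Ms. \<forall>t\<in>{0<..<1::real}.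
            Jtilde Q (convex_comb t p q) \<le> ereal t * Jtilde Q p + ereal (1 - t) * Jtilde Q q)
       \<and> (\<forall>ps p. (\<forall>k. ps k \<in> Ms) \<longrightarrow> p \<in> Ms \<longrightarrow> Ms_conv ps p \<longrightarrow>
            Jtilde Q p \<le> liminf (\<lambda>k. Jtilde Q (ps k)))
       \<and> (\<forall>p\<in>Ms. Jtilde Q p \<le> Jhat Q p)"
proof (intro conjI ballI allI impI)
  fix p q :: "('a \<times> 'a \<Rightarrow> real) \<times> ('a \<times> 'a list \<Rightarrow> real)" and t assume "p \<in> Ms" "q \<in> Ms" "t \<in> {0<..<1::real}"
  then show "Jtilde Q (convex_comb t p q) \<le> ereal t * Jtilde Q p + ereal (1 - t) * Jtilde Q q"
    using Jhat_convex_comb[of p q t Q] prob_mass_convex_comb[of p q t]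
    by (simp add: Ms_prob_mass Jtilde_eq_Jhat)
next
  fix ps and p :: "('a \<times> 'a \<Rightarrow> real) \<times> ('a \<times> 'a list \<Rightarrow> real)" assume "\<forall>k. ps k \<in> Ms" "p \<in> Ms" "Ms_conv ps p"
  then show "Jtilde Q p \<le> liminf (\<lambda>k. Jtilde Q (ps k))"
    using Jhat_le_liminf[of ps p Q] by (simp add: Ms_prob_mass Jtilde_eq_Jhat)
next
  fix p :: "('a \<times> 'a \<Rightarrow> real) \<times> ('a \<times> 'a list \<Rightarrow> real)" assume "p \<in> Ms"
  then show "Jtilde Q p \<le> Jhat Q p" by (simp add: Ms_prob_mass Jtilde_eq_Jhat)
qed

end
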